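(* Let $h\geq 3$. If there exists a $(K_2,S(C_h))$-URD$(v;r,s)$ with $s>0$, then $v\equiv 0\pmod{2h}$ and $s\equiv 0\pmod 2$.
   Context: For $h\geq 3$, an $h$-sun is the graph on $2h$ distinct vertices $a_1,\ldots,a_h,b_1,\ldots,b_h$ consisting of the $h$-cycle $(a_1,a_2,\ldots,a_h)$ together with the edges $\{a_i,b_i\}$, $i=1,\ldots,h$. A $(K_2,S(C_h))$-URD$(v;r,s)$ is a partition of the edge set of the complete graph $K_v$ into $r$ classes each of which is a 1-factor (perfect matching) of $K_v$, and $s$ classes each of which is a set of vertex-disjoint $h$-suns covering every vertex of $K_v$ exactly once. *)

theory Defs
  imports Main
begin

definition complete_edges :: "'a set \<Rightarrow> 'a set set" where
  "complete_edges V = {{x, y} | x y. x \<in> V \<and> y \<in> V \<and> x \<noteq> y}"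

definition one_factor :: "'a set \<Rightarrow> 'a set set \<Rightarrow> bool" where
  "one_factor V M \<longleftrightarrow> M \<subseteq> complete_edges V \<and> (\<forall>x\<in>V. \<exists>!e. e \<in> M \<and> x \<in> e)"

definition sun_edges :: "nat \<Rightarrow> (nat \<Rightarrow> 'a) \<Rightarrow> (nat \<Rightarrow> 'a) \<Rightarrow> 'a set set" where
  "sun_edges h a b =
     {{a i, a ((i + 1) mod h)} | i. i < h} \<union> {{a i, b i} | i. i < h}"

definition is_sun :: "nat \<Rightarrow> 'a set set \<Rightarrow> bool" where
  "is_sun h S \<longleftrightarrow> (\<exists>a b. inj_on a {..<h} \<and> inj_on b {..<h} \<and>
      a ` {..<h} \<inter> b ` {..<h} = {} \<and> S = sun_edges h a b)"

definition sun_class :: "nat \<Rightarrow> 'a set \<Rightarrow> 'a set set set \<Rightarrow> bool" where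
  "sun_class h V F \<longleftrightarrow> (\<forall>S\<in>F. is_sun h S \<and> S \<subseteq> complete_edges V) \<and>
      (\<forall>x\<in>V. \<exists>!S. S \<in> F \<and> x \<in> \<Union>S)"

text \<open>A (K_2, S(C_h))-URD(v; r, s): a partition of the edge set of K_v (vertex set
  {..<v}) into r classes M 0, ..., M (r-1) which are 1-factors and s classes
  (edge sets of) F 0, ..., F (s-1) which are sun classes.\<close>
definition URD :: "nat \<Rightarrow> nat \<Rightarrow> nat \<Rightarrow> nat \<Rightarrow> bool" where
  "URD h v r s \<longleftrightarrow> (\<exists>(M :: nat \<Rightarrow> nat set set) (F :: nat \<Rightarrow> nat set set set).
     (\<forall>i<r. one_factor {..<v} (M i)) \<and>
     (\<forall>j<s. sun_class h {..<v} (F j)) \<and>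
     (let C = (\<lambda>k. if k < r then M k else \<Union>(F (k - r))) in
        (\<forall>k<r+s. C k \<noteq> {}) \<and>
        (\<forall>e\<in>complete_edges {..<v}. \<exists>!k. k < r + s \<and> e \<in> C k)))"

end

theory Submission
  imports Defs "HOL-Library.Disjoint_Sets"
begin

text \<open>In an h-sun each cycle vertex has degree 3 and each pendant vertex degree 1, so the
  degrees in a sun class are odd and sum to twice the number of vertices, while a 1-factor
  contributes degree 1 at every vertex. A sun class splits the v vertices into suns of 2h
  vertices each, so 2h divides v. Counting the v - 1 edges at a vertex x class by class gives
  v - 1 = r + d_1(x) + ... + d_s(x), where d_j(x) is the degree of x in the j-th sun
  class; summing over x yields v(v - 1) = rv + 2sv, hence v - 1 = r + 2s. So the s odd
  numbers d_j(x) sum to 2s, and s must be even.\<close>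

definition degree :: "'a set set \<Rightarrow> 'a \<Rightarrow> nat" where
  "degree E x = card {e \<in> E. x \<in> e}"

lemma finite_complete_edges: "finite V \<Longrightarrow> finite (complete_edges V)"
  by (rule finite_subset[of _ "Pow V"]) (auto simp: complete_edges_def)

lemma Union_complete_edges_subset: "\<Union>(complete_edges V) \<subseteq> V"
  by (auto simp: complete_edges_def)

lemma degree_complete_edges:
  assumes "finite V" "x \<in> V"
  shows "degree (complete_edges V) x = card V - 1"
proof -
  have "{e \<in> complete_edges V. x \<in> e} = (\<lambda>y. {x, y}) ` (V - {x})"
    using assms(2) by (auto simp: complete_edges_def insert_commute)
  moreover have "inj_on (\<lambda>y. {x, y}) (V - {x})"
    by (auto simp: inj_on_def doubleton_eq_iff)
  ultimately show ?thesis
    using assms by (simp add: degree_def card_image)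
qed

lemma degree_one_factor: "one_factor V M \<Longrightarrow> x \<in> V \<Longrightarrow> degree M x = 1"
proof -
  assume "one_factor V M" "x \<in> V"
  then obtain e where "\<forall>e'. e' \<in> M \<and> x \<in> e' \<longleftrightarrow> e' = e"
    unfolding one_factor_def by metis
  then have "{e' \<in> M. x \<in> e'} = {e}" by blast
  then show ?thesis by (simp add: degree_def)
qed

lemma degree_UN_disjoint:
  assumes "finite I" "\<And>i. i \<in> I \<Longrightarrow> finite (E i)" "disjoint_family_on E I"
  shows "degree (\<Union>i\<in>I. E i) x = (\<Sum>i\<in>I. degree (E i) x)"
proof -
  have "{e \<in> (\<Union>i\<in>I. E i). x \<in> e} = (\<Union>i\<in>I. {e \<in> E i. x \<in> e})" by blast
  moreover have "disjoint_family_on (\<lambda>i. {e \<in> E i. x \<in> e}) I"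
    using assms(3) by (auto simp: disjoint_family_on_def)
  ultimately show ?thesis
    using assms(1,2) by (simp add: degree_def card_UN_disjoint')
qed

lemma degree_Union_vertex_disjoint:
  assumes "disjoint_family_on Union F" "S \<in> F" "x \<in> \<Union>S"
  shows "degree (\<Union>F) x = degree S x"
proof -
  have "{e \<in> \<Union>F. x \<in> e} = {e \<in> S. x \<in> e}"
    using assms by (auto simp: disjoint_family_on_def)
  then show ?thesis by (simp add: degree_def)
qed

text \<open>The cyclic predecessor of i is written (i + h - 1) mod h, avoiding truncated
  subtraction at i = 0.\<close>

lemma cycle_index_pred:
  fixes h i :: nat
  assumes "3 \<le> h" "i < h"
  shows "(i + h - 1) mod h < h" and "((i + h - 1) mod h + 1) mod h = i"
    and "\<And>k. k < h \<Longrightarrow> (k + 1) mod h = i \<Longrightarrow> k = (i + h - 1) mod h"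
    and "distinct [i, (i + 1) mod h, (i + h - 1) mod h]"
proof -
  have pred: "(i + h - 1) mod h = (if i = 0 then h - 1 else i - 1)"
  proof (cases "i = 0")
    case False
    then have "i + h - 1 = (i - 1) + h" by simp
    then have "(i + h - 1) mod h = (i - 1) mod h" by simp
    then show ?thesis using False assms by simp
  qed (use assms in simp)
  show "(i + h - 1) mod h < h" using assms by simp
  show "((i + h - 1) mod h + 1) mod h = i" unfolding pred using assms by (auto simp: mod_if)
  show "k = (i + h - 1) mod h" if "k < h" "(k + 1) mod h = i" for k
    using that assms unfolding pred by (auto simp: mod_if split: if_splits)
  show "distinct [i, (i + 1) mod h, (i + h - 1) mod h]"
    using assms unfolding pred by (auto simp: mod_if)
qed

lemma mem_sun_edges:
  "e \<in> sun_edges h a b \<longleftrightarrow> (\<exists>k<h. e = {a k, a ((k + 1) mod h)}) \<or> (\<exists>k<h. e = {a k, b k})"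
  unfolding sun_edges_def by blast

locale sun =
  fixes h :: nat and a b :: "nat \<Rightarrow> 'a"
  assumes three_le: "3 \<le> h"
    and inj_a: "inj_on a {..<h}" and inj_b: "inj_on b {..<h}"
    and disjoint_ab: "a ` {..<h} \<inter> b ` {..<h} = {}"
begin

lemma a_eq_iff: "k < h \<Longrightarrow> i < h \<Longrightarrow> a k = a i \<longleftrightarrow> k = i"
  using inj_a by (auto dest: inj_onD)

lemma b_eq_iff: "k < h \<Longrightarrow> i < h \<Longrightarrow> b k = b i \<longleftrightarrow> k = i"
  using inj_b by (auto dest: inj_onD)

lemma a_neq_b: "k < h \<Longrightarrow> i < h \<Longrightarrow> a k \<noteq> b i"
  using disjoint_ab by blast

lemma vertices: "\<Union>(sun_edges h a b) = a ` {..<h} \<union> b ` {..<h}"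
proof (intro equalityI subsetI)
  fix x assume "x \<in> \<Union>(sun_edges h a b)"
  moreover have "(k + 1) mod h < h" for k using three_le by simp
  ultimately show "x \<in> a ` {..<h} \<union> b ` {..<h}" by (auto simp: mem_sun_edges)
next
  fix x assume "x \<in> a ` {..<h} \<union> b ` {..<h}"
  then obtain k where "k < h" "x \<in> {a k, b k}" by auto
  moreover from \<open>k < h\<close> have "{a k, b k} \<in> sun_edges h a b" by (auto simp: mem_sun_edges)
  ultimately show "x \<in> \<Union>(sun_edges h a b)" by blast
qed

lemma card_vertices: "card (\<Union>(sun_edges h a b)) = 2 * h"
  unfolding vertices using disjoint_ab inj_a inj_b by (simp add: card_Un_disjoint card_image)

lemma degree_cycle_vertex:
  assumes i: "i < h"
  shows "degree (sun_edges h a b) (a i) = 3"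
proof -
  define p where "p = (i + h - 1) mod h"
  note idx = cycle_index_pred[OF three_le i, folded p_def]
  have p: "p < h" and n: "(i + 1) mod h < h" using idx(1) by simp_all
  have "{e \<in> sun_edges h a b. a i \<in> e} = {{a i, a ((i + 1) mod h)}, {a p, a i}, {a i, b i}}"
  proof (intro equalityI subsetI)
    fix e assume "e \<in> {e \<in> sun_edges h a b. a i \<in> e}"
    then have e: "e \<in> sun_edges h a b" "a i \<in> e" by auto
    then consider k where "k < h" "e = {a k, a ((k + 1) mod h)}" | k where "k < h" "e = {a k, b k}"
      by (auto simp: mem_sun_edges)
    then show "e \<in> {{a i, a ((i + 1) mod h)}, {a p, a i}, {a i, b i}}"
    proof cases
      case (1 k)
      then have "k = i \<or> (k + 1) mod h = i"
        using e(2) i a_eq_iff[of k i] a_eq_iff[of "(k + 1) mod h" i] by auto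
      then show ?thesis using 1 idx(3) by auto
    next
      case (2 k)
      then have "a i = a k" using e(2) a_neq_b[OF i \<open>k < h\<close>] by auto
      then show ?thesis using 2 a_eq_iff[OF \<open>k < h\<close> i] by simp
    qed
  next
    fix e assume e: "e \<in> {{a i, a ((i + 1) mod h)}, {a p, a i}, {a i, b i}}"
    have "{a p, a i} \<in> sun_edges h a b"
      unfolding mem_sun_edges using p idx(2) by (intro disjI1 exI[of _ p]) simp
    then show "e \<in> {e \<in> sun_edges h a b. a i \<in> e}"
      using e i by (auto simp: mem_sun_edges)
  qed
  moreover have "distinct [a i, a ((i + 1) mod h), a p, b i]"
    using idx(4) i n p by (simp add: a_eq_iff a_neq_b)
  ultimately show ?thesis
    unfolding degree_def by (simp add: doubleton_eq_iff)
qed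

lemma degree_pendant_vertex:
  assumes i: "i < h"
  shows "degree (sun_edges h a b) (b i) = 1"
proof -
  have "{e \<in> sun_edges h a b. b i \<in> e} = {{a i, b i}}"
  proof (intro equalityI subsetI)
    fix e assume "e \<in> {e \<in> sun_edges h a b. b i \<in> e}"
    then have e: "e \<in> sun_edges h a b" "b i \<in> e" by auto
    then consider k where "k < h" "e = {a k, a ((k + 1) mod h)}" | k where "k < h" "e = {a k, b k}"
      by (auto simp: mem_sun_edges)
    then show "e \<in> {{a i, b i}}"
    proof cases
      case (1 k)
      moreover have "(k + 1) mod h < h" using three_le by simp
      ultimately have "b i \<notin> e" using i a_neq_b by (metis empty_iff insert_iff)
      then show ?thesis using e(2) by contradiction
    next
      case (2 k)
      then have "b i = b k" using e(2) a_neq_b[OF \<open>k < h\<close> i] by auto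
      then show ?thesis using 2 b_eq_iff[OF \<open>k < h\<close> i] by simp
    qed
  qed (use i in \<open>auto simp: mem_sun_edges\<close>)
  then show ?thesis by (simp add: degree_def)
qed

lemma odd_degree: "x \<in> \<Union>(sun_edges h a b) \<Longrightarrow> odd (degree (sun_edges h a b) x)"
  unfolding vertices using degree_cycle_vertex degree_pendant_vertex by auto

lemma sum_degree:
  "(\<Sum>x\<in>\<Union>(sun_edges h a b). degree (sun_edges h a b) x) = 2 * card (\<Union>(sun_edges h a b))"
proof -
  have "(\<Sum>x\<in>\<Union>(sun_edges h a b). degree (sun_edges h a b) x)
      = (\<Sum>i<h. degree (sun_edges h a b) (a i)) + (\<Sum>i<h. degree (sun_edges h a b) (b i))"
    using disjoint_ab inj_a inj_b by (simp add: vertices sum.union_disjoint sum.reindex)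
  also have "\<dots> = 4 * h" using degree_cycle_vertex degree_pendant_vertex by simp
  finally show ?thesis using card_vertices by simp
qed

end

lemma is_sunE:
  assumes "3 \<le> h" "is_sun h S"
  obtains a b where "sun h a b" "S = sun_edges h a b"
  using assms unfolding is_sun_def sun_def by blast

lemma
  assumes "3 \<le> h" "is_sun h S"
  shows card_Union_is_sun: "card (\<Union>S) = 2 * h"
    and odd_degree_is_sun: "x \<in> \<Union>S \<Longrightarrow> odd (degree S x)"
    and sum_degree_is_sun: "(\<Sum>x\<in>\<Union>S. degree S x) = 2 * card (\<Union>S)"
proof -
  obtain a b where "sun h a b" and S: "S = sun_edges h a b"
    using is_sunE[OF assms] .
  interpret sun h a b by fact
  show "card (\<Union>S) = 2 * h" "x \<in> \<Union>S \<Longrightarrow> odd (degree S x)"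
    "(\<Sum>x\<in>\<Union>S. degree S x) = 2 * card (\<Union>S)"
    unfolding S by (simp_all add: card_vertices odd_degree sum_degree)
qed

lemma Union_subset_sun_class:
  assumes "sun_class h V F" "S \<in> F"
  shows "\<Union>S \<subseteq> V"
proof -
  have "\<forall>S\<in>F. is_sun h S \<and> S \<subseteq> complete_edges V"
    using assms(1) unfolding sun_class_def by (rule conjunct1)
  then have "\<Union>S \<subseteq> \<Union>(complete_edges V)" using assms(2) by (simp add: Union_mono)
  then show ?thesis using Union_complete_edges_subset by (rule subset_trans)
qed

lemma sun_class_vertex_partition:
  assumes "sun_class h V F"
  shows "disjoint_family_on Union F" and "(\<Union>S\<in>F. \<Union>S) = V"
proof -
  have uniq: "\<forall>x\<in>V. \<exists>!S. S \<in> F \<and> x \<in> \<Union>S"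
    using assms unfolding sun_class_def by (rule conjunct2)
  note sub = Union_subset_sun_class[OF assms]
  show "disjoint_family_on Union F"
    unfolding disjoint_family_on_def
  proof (intro ballI impI)
    fix S T assume "S \<in> F" "T \<in> F" "S \<noteq> T"
    show "\<Union>S \<inter> \<Union>T = {}"
    proof (rule ccontr)
      assume "\<Union>S \<inter> \<Union>T \<noteq> {}"
      then obtain x where "x \<in> \<Union>S" "x \<in> \<Union>T" by blast
      moreover from this have "\<exists>!U. U \<in> F \<and> x \<in> \<Union>U"
        using uniq sub \<open>S \<in> F\<close> by blast
      ultimately show False using \<open>S \<in> F\<close> \<open>T \<in> F\<close> \<open>S \<noteq> T\<close> by blast
    qed
  qed
  show "(\<Union>S\<in>F. \<Union>S) = V"
  proof (intro equalityI subsetI)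
    fix x assume "x \<in> V"
    then obtain S where "S \<in> F" "x \<in> \<Union>S" using uniq by blast
    then show "x \<in> (\<Union>S\<in>F. \<Union>S)" by blast
  qed (use sub in blast)
qed

lemma finite_sun_class: "finite V \<Longrightarrow> sun_class h V F \<Longrightarrow> finite F"
  by (rule finite_subset[of _ "Pow (complete_edges V)"])
    (auto simp: sun_class_def finite_complete_edges)

lemma finite_Union_sun_class_member:
  "finite V \<Longrightarrow> sun_class h V F \<Longrightarrow> S \<in> F \<Longrightarrow> finite (\<Union>S)"
  by (rule finite_subset[OF Union_subset_sun_class])

lemma card_sun_class:
  assumes "3 \<le> h" "finite V" "sun_class h V F"
  shows "card V = 2 * h * card F"
proof -
  note partition = sun_class_vertex_partition[OF assms(3)]
  note fin = finite_sun_class[OF assms(2,3)] finite_Union_sun_class_member[OF assms(2,3)]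
  have "card V = (\<Sum>S\<in>F. card (\<Union>S))"
    using card_UN_disjoint'[OF partition(1) fin(2) fin(1)] partition(2) by simp
  also have "\<dots> = (\<Sum>S\<in>F. 2 * h)"
    using assms(1,3) card_Union_is_sun by (intro sum.cong) (auto simp: sun_class_def)
  finally show ?thesis by simp
qed

lemma odd_degree_sun_class:
  assumes "3 \<le> h" "sun_class h V F" "x \<in> V"
  shows "odd (degree (\<Union>F) x)"
proof -
  note partition = sun_class_vertex_partition[OF assms(2)]
  obtain S where S: "S \<in> F" "x \<in> \<Union>S"
    using assms(3) unfolding partition(2)[symmetric] by blast
  then have "degree (\<Union>F) x = degree S x"
    by (rule degree_Union_vertex_disjoint[OF partition(1)])
  then show ?thesis
    using odd_degree_is_sun[OF assms(1) _ S(2)] S(1) assms(2) by (simp add: sun_class_def)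
qed

lemma sum_degree_sun_class:
  assumes "3 \<le> h" "finite V" "sun_class h V F"
  shows "(\<Sum>x\<in>V. degree (\<Union>F) x) = 2 * card V"
proof -
  note partition = sun_class_vertex_partition[OF assms(3)]
  note fin = finite_sun_class[OF assms(2,3)] finite_Union_sun_class_member[OF assms(2,3)]
  have "(\<Sum>x\<in>V. degree (\<Union>F) x) = (\<Sum>S\<in>F. \<Sum>x\<in>\<Union>S. degree (\<Union>F) x)"
    using sum.UNION_disjoint_family[OF fin(1) _ partition(1)] fin(2) partition(2) by simp
  also have "\<dots> = (\<Sum>S\<in>F. \<Sum>x\<in>\<Union>S. degree S x)"
    by (intro sum.cong refl) (simp only: degree_Union_vertex_disjoint[OF partition(1)])
  also have "\<dots> = (\<Sum>S\<in>F. 2 * card (\<Union>S))"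
    using assms(1,3) sum_degree_is_sun by (intro sum.cong) (auto simp: sun_class_def)
  also have "\<dots> = 2 * card V"
    using card_UN_disjoint'[OF partition(1) fin(2) fin(1)] partition(2)
    by (simp add: sum_distrib_left)
  finally show ?thesis .
qed

lemma degree_partition_complete_edges:
  fixes n :: nat
  assumes "finite V" "x \<in> V"
    and "\<forall>k<n. C k \<subseteq> complete_edges V"
    and "\<forall>e\<in>complete_edges V. \<exists>!k. k < n \<and> e \<in> C k"
  shows "card V - 1 = (\<Sum>k<n. degree (C k) x)"
proof -
  have union: "complete_edges V = (\<Union>k<n. C k)"
  proof (intro equalityI subsetI)
    fix e assume "e \<in> complete_edges V"
    then obtain k where "k < n" "e \<in> C k" using assms(4) by (meson ex1E)
    then show "e \<in> (\<Union>k<n. C k)" by blast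
  qed (use assms(3) in blast)
  have disjoint: "disjoint_family_on C {..<n}"
    unfolding disjoint_family_on_def
  proof (intro ballI impI equals0I)
    fix k l e assume "k \<in> {..<n}" "l \<in> {..<n}" "k \<noteq> l" "e \<in> C k \<inter> C l"
    moreover from this have "\<exists>!k. k < n \<and> e \<in> C k" using assms(3,4) by blast
    ultimately show False by blast
  qed
  have finite: "finite (C k)" if "k \<in> {..<n}" for k
    using assms(1,3) that finite_complete_edges finite_subset by blast
  have "degree (complete_edges V) x = (\<Sum>k<n. degree (C k) x)"
    unfolding union using degree_UN_disjoint[OF finite_lessThan finite disjoint] .
  then show ?thesis
    using degree_complete_edges[OF assms(1,2)] by simp
qed

lemma sum_lessThan_add:
  fixes g :: "nat \<Rightarrow> 'a::comm_monoid_add"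
  shows "(\<Sum>k<m + n. g k) = (\<Sum>k<m. g k) + (\<Sum>k<n. g (m + k))"
  by (induction n) (simp_all add: add.assoc)

lemma URD_degree_equation:
  assumes "URD h v r s"
  obtains F where "\<forall>j<s. sun_class h {..<v} (F j)" and "\<forall>j<s. F j \<noteq> {}"
    and "\<forall>x<v. v - 1 = r + (\<Sum>j<s. degree (\<Union>(F j)) x)"
proof -
  obtain M F where M: "\<forall>i<r. one_factor {..<v} (M i)" and F: "\<forall>j<s. sun_class h {..<v} (F j)"
    and nonempty: "\<forall>k<r + s. (if k < r then M k else \<Union>(F (k - r))) \<noteq> {}"
    and part: "\<forall>e\<in>complete_edges {..<v}.
      \<exists>!k. k < r + s \<and> e \<in> (if k < r then M k else \<Union>(F (k - r)))"
    using assms unfolding URD_def Let_def by blast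
  have nonempty_F: "\<forall>j<s. F j \<noteq> {}"
  proof (intro allI impI)
    fix j assume "j < s"
    then show "F j \<noteq> {}" using nonempty[rule_format, of "r + j"] by auto
  qed
  define C where "C k = (if k < r then M k else \<Union>(F (k - r)))" for k
  have sub: "\<forall>k<r + s. C k \<subseteq> complete_edges {..<v}"
  proof (intro allI impI)
    fix k assume "k < r + s"
    show "C k \<subseteq> complete_edges {..<v}"
    proof (cases "k < r")
      case True
      then show ?thesis using M unfolding C_def one_factor_def by simp
    next
      case False
      then have "sun_class h {..<v} (F (k - r))" using F \<open>k < r + s\<close> by simp
      then show ?thesis using False unfolding C_def sun_class_def by auto
    qed
  qed
  have eq: "\<forall>x<v. v - 1 = r + (\<Sum>j<s. degree (\<Union>(F j)) x)"
  proof (intro allI impI)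
    fix x assume "x < v"
    have "v - 1 = (\<Sum>k<r + s. degree (C k) x)"
      using degree_partition_complete_edges[OF _ _ sub part[folded C_def]] \<open>x < v\<close> by simp
    also have "\<dots> = (\<Sum>k<r. degree (M k) x) + (\<Sum>j<s. degree (\<Union>(F j)) x)"
      by (simp add: sum_lessThan_add C_def)
    also have "(\<Sum>k<r. degree (M k) x) = (\<Sum>k<r. 1)"
      using M \<open>x < v\<close> by (intro sum.cong refl degree_one_factor) auto
    finally show "v - 1 = r + (\<Sum>j<s. degree (\<Union>(F j)) x)" by simp
  qed
  show ?thesis using F nonempty_F eq by (rule that)
qed

lemma degree_equation_double_count:
  assumes "3 \<le> h" "0 < v" "\<forall>j<s. sun_class h {..<v} (F j)"
    and "\<forall>x<v. v - 1 = r + (\<Sum>j<s. degree (\<Union>(F j)) x)"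
  shows "v - 1 = r + 2 * s"
proof -
  have "v * (v - 1) = (\<Sum>x<v. v - 1)" by simp
  also have "\<dots> = (\<Sum>x<v. r + (\<Sum>j<s. degree (\<Union>(F j)) x))"
    using assms(4) by (intro sum.cong) auto
  also have "\<dots> = v * r + (\<Sum>j<s. \<Sum>x<v. degree (\<Union>(F j)) x)"
    by (simp add: sum.distrib sum.swap[where A = "{..<v}"])
  also have "\<dots> = v * (r + 2 * s)"
    using assms(3) sum_degree_sun_class[OF assms(1) finite_lessThan] by (simp add: algebra_simps)
  finally show ?thesis using assms(2) by simp
qed

theorem lemma2p1:
  fixes h v r s :: nat
  assumes "h \<ge> 3" and "URD h v r s" and "s > 0"
  shows "v mod (2 * h) = 0 \<and> even s"
proof -
  obtain F where F: "\<forall>j<s. sun_class h {..<v} (F j)" and nonempty: "\<forall>j<s. F j \<noteq> {}"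
    and deg: "\<forall>x<v. v - 1 = r + (\<Sum>j<s. degree (\<Union>(F j)) x)"
    using URD_degree_equation[OF assms(2)] by blast
  have F0: "sun_class h {..<v} (F 0)" "F 0 \<noteq> {}"
    using F nonempty assms(3) by simp_all
  have v: "v = 2 * h * card (F 0)"
    using card_sun_class[OF assms(1) finite_lessThan F0(1)] by simp
  moreover have "card (F 0) > 0"
    using finite_sun_class[OF finite_lessThan F0(1)] F0(2) by (simp add: card_gt_0_iff)
  ultimately have "0 < v" using assms(1) by simp
  then have "(\<Sum>j<s. degree (\<Union>(F j)) 0) = 2 * s"
    using degree_equation_double_count[OF assms(1) _ F deg] deg by simp
  moreover have "{j \<in> {..<s}. odd (degree (\<Union>(F j)) 0)} = {..<s}"
    using odd_degree_sun_class[OF assms(1) _ lessThan_iff[THEN iffD2, OF \<open>0 < v\<close>]] F by auto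
  ultimately have "even s"
    using even_sum_iff[of "{..<s}" "\<lambda>j. degree (\<Union>(F j)) 0"] by simp
  with v show ?thesis by simp
qed

end
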